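(* Let $A=[a_{ij}]\in\{0,1\}^{N\times N}$ be the adjacency matrix of a static contact graph (with $a_{ii}=0$), let $\kappa>0$, $\beta_a\ge 0$, and let $H=(h_1,\dots,h_N):\mathbb{R}^N\to\mathbb{R}^N$ be the center manifold map of the SAIS system in the coordinates $(\mathbf p,\mathbf r)$ described in the context (in particular each component $h_j$ is nonnegative). Then the trajectories of the reduced system \[ \dot{\hat r}_i=-\kappa\Big(1+\frac{\beta_a}{\kappa}\Big)\hat r_i\sum_{j=1}^N a_{ij}h_j(\hat{\mathbf r}),\qquad i\in\{1,\dots,N\}, \] converge asymptotically to the set \[ \Omega=\Big\{\hat{\mathbf r}\in\mathbb{R}^N:\ \hat r_i\sum_{j=1}^N a_{ij}h_j(\hat{\mathbf r})=0\ \text{for all } i\Big\}. \]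
   Context: Setting: the SAIS system $\dot p_i=\beta_0(1-p_i-q_i)\sum_j a_{ij}p_j+\beta_a q_i\sum_j a_{ij}p_j-\delta p_i$, $\dot q_i=\kappa(1-p_i-q_i)\sum_j a_{ij}p_j-\beta_a q_i\sum_j a_{ij}p_j$, with $\beta_0>0$, $\delta>0$, $\kappa>0$, $0\le\beta_a<\beta_0$, where $p_i,q_i$ are infection/alert probabilities and $a_{ij}=1$ iff $j$ is a neighbor of $i$. Define $r_i=q_i-\frac{1-p_i}{1+\beta_a/\kappa}$, $\mathbf p=(p_1,\dots,p_N)^T$, $\mathbf r=(r_1,\dots,r_N)^T$ and $\beta_{eq}=\beta_0\frac{\beta_a/\kappa}{1+\beta_a/\kappa}+\beta_a\frac{1}{1+\beta_a/\kappa}$. In these coordinates the system reads $\dot{\mathbf p}=(\beta_{eq}A-\delta I)\mathbf p+G_1(\mathbf p,\mathbf r)$, $\dot{\mathbf r}=G_2(\mathbf p,\mathbf r)$, where $G_1,G_2$ have components $g_{1,i}=-\{\beta_0+\frac{\beta_0+\beta_a}{1+\beta_a/\kappa}\}p_i\sum_j a_{ij}p_j-(\beta_0-\beta_a)r_i\sum_j a_{ij}p_j$ and $g_{2,i}=-\kappa(1+\frac{\beta_a}{\kappa})r_i\sum_j a_{ij}p_j$. When $\beta_{eq}A-\delta I$ is Hurwitz, center manifold theory gives a map $H$ with $H(\mathbf 0)=\mathbf 0$, $\nabla H(\mathbf 0)=\mathbf 0$ such that $\mathbf p=H(\mathbf r)$ is an invariant (center) manifold near the origin; since $p_i$ are probabilities,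 each $h_i$ is nonnegative. *)

theory Defs
  imports "HOL-Analysis.Analysis"
begin

text \<open>SAIS model on N nodes; nodes are indexed by a finite type 'n (N = CARD('n)),
  vectors in R^N are elements of real^'n.  The adjacency matrix is a :: 'n => 'n => real.\<close>

definition adjacency :: "('n::finite \<Rightarrow> 'n \<Rightarrow> real) \<Rightarrow> bool" where
  "adjacency a \<longleftrightarrow> (\<forall>i j. a i j = 0 \<or> a i j = 1) \<and> (\<forall>i. a i i = 0) \<and> (\<forall>i j. a i j = a j i)"

definition beta_eq :: "real \<Rightarrow> real \<Rightarrow> real \<Rightarrow> real" where
  "beta_eq b0 ba k = b0 * ((ba / k) / (1 + ba / k)) + ba * (1 / (1 + ba / k))"

definition lin_part :: "real \<Rightarrow> real \<Rightarrow> real \<Rightarrow> real \<Rightarrow> ('n::finite \<Rightarrow> 'n \<Rightarrow> real)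
    \<Rightarrow> real^'n \<Rightarrow> real^'n" where
  "lin_part b0 ba k d a p = (\<chi> i. beta_eq b0 ba k * (\<Sum>j\<in>UNIV. a i j * p$j) - d * p$i)"

definition G1 :: "real \<Rightarrow> real \<Rightarrow> real \<Rightarrow> ('n::finite \<Rightarrow> 'n \<Rightarrow> real)
    \<Rightarrow> real^'n \<Rightarrow> real^'n \<Rightarrow> real^'n" where
  "G1 b0 ba k a p r = (\<chi> i. - (b0 + (b0 + ba) / (1 + ba / k)) * p$i * (\<Sum>j\<in>UNIV. a i j * p$j)
                          - (b0 - ba) * r$i * (\<Sum>j\<in>UNIV. a i j * p$j))"

definition G2 :: "real \<Rightarrow> real \<Rightarrow> ('n::finite \<Rightarrow> 'n \<Rightarrow> real)
    \<Rightarrow> real^'n \<Rightarrow> real^'n \<Rightarrow> real^'n" where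
  "G2 ba k a p r = (\<chi> i. - k * (1 + ba / k) * r$i * (\<Sum>j\<in>UNIV. a i j * p$j))"

text \<open>H is a center manifold map of the SAIS system in (p,r) coordinates:
  H differentiable, H(0)=0, DH(0)=0, the graph p = H(r) is invariant near the origin
  (invariance equation DH(r)[G2(H r, r)] = (beta_eq A - delta I) H r + G1(H r, r)),
  and each component of H is nonnegative.\<close>
definition center_manifold_map :: "real \<Rightarrow> real \<Rightarrow> real \<Rightarrow> real \<Rightarrow> ('n::finite \<Rightarrow> 'n \<Rightarrow> real)
    \<Rightarrow> (real^'n \<Rightarrow> real^'n) \<Rightarrow> bool" where
  "center_manifold_map b0 ba k d a H \<longleftrightarrow>
     (\<exists>H'. (\<forall>x. (H has_derivative H' x) (at x))
        \<and> H 0 = 0 \<and> H' 0 = (\<lambda>_. 0)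
        \<and> (\<exists>e>0. \<forall>r\<in>ball 0 e. H' r (G2 ba k a (H r) r) = lin_part b0 ba k d a (H r) + G1 b0 ba k a (H r) r))
     \<and> (\<forall>r j. H r $ j \<ge> 0)"

definition reduced_field :: "real \<Rightarrow> real \<Rightarrow> ('n::finite \<Rightarrow> 'n \<Rightarrow> real)
    \<Rightarrow> (real^'n \<Rightarrow> real^'n) \<Rightarrow> real^'n \<Rightarrow> real^'n" where
  "reduced_field ba k a H r = (\<chi> i. - k * (1 + ba / k) * r$i * (\<Sum>j\<in>UNIV. a i j * H r $ j))"

definition Omega_set :: "('n::finite \<Rightarrow> 'n \<Rightarrow> real) \<Rightarrow> (real^'n \<Rightarrow> real^'n) \<Rightarrow> (real^'n) set" where
  "Omega_set a H = {r. \<forall>i. r$i * (\<Sum>j\<in>UNIV. a i j * H r $ j) = 0}"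

end

theory Submission
  imports Defs
begin

text \<open>Along the reduced flow the squared norm \<open>\<parallel>r\<parallel>\<^sup>2\<close> is a Lyapunov function: its derivative
  is \<open>-2(\<kappa> + \<beta>\<^sub>a) \<Sum>\<^sub>i r\<^sub>i\<^sup>2 \<Sum>\<^sub>j a\<^sub>i\<^sub>j h\<^sub>j(r)\<close>, which is \<open>\<le> 0\<close> because \<open>a\<^sub>i\<^sub>j, h\<^sub>j \<ge> 0\<close> and vanishes exactly
  on \<open>\<Omega>\<close>.  A LaSalle-type argument then applies: trajectories stay in a ball, move with bounded
  speed, so a trajectory that is far from \<open>\<Omega>\<close> at arbitrarily late times spends a time window
  of fixed length at distance at least half as large, and so each time dissipates a fixed amount of \<open>\<parallel>r\<parallel>\<^sup>2\<close>, contradicting the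
  convergence of the nonincreasing function \<open>\<parallel>r(t)\<parallel>\<^sup>2\<close>.\<close>

lemma sqnorm_decrease_along_trajectory:
  fixes r :: "real \<Rightarrow> 'a::real_inner"
  assumes deriv: "\<And>t. t \<ge> 0 \<Longrightarrow> (r has_vector_derivative F (r t)) (at t within {0..})"
    and "0 \<le> \<alpha>" "\<alpha> \<le> \<beta>"
    and dissip: "\<And>\<tau>. \<tau> \<in> {\<alpha>..\<beta>} \<Longrightarrow> r \<tau> \<bullet> F (r \<tau>) \<le> - \<mu>"
  shows "(norm (r \<beta>))\<^sup>2 + 2 * \<mu> * (\<beta> - \<alpha>) \<le> (norm (r \<alpha>))\<^sup>2"
proof (cases "\<alpha> = \<beta>")
  case False
  then have lt: "\<alpha> < \<beta>" using \<open>\<alpha> \<le> \<beta>\<close> by simp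
  define W where "W \<tau> = r \<tau> \<bullet> r \<tau> + 2 * \<mu> * \<tau>" for \<tau>
  have "\<exists>x\<in>{\<alpha><..<\<beta>}. W \<beta> - W \<alpha> =
      (\<lambda>h. r x \<bullet> (h *\<^sub>R F (r x)) + (h *\<^sub>R F (r x)) \<bullet> r x + 2 * \<mu> * h) (\<beta> - \<alpha>)"
  proof (rule mvt_simple[OF lt])
    fix x assume x: "\<alpha> \<le> x" "x \<le> \<beta>"
    have d: "(r has_derivative (\<lambda>h. h *\<^sub>R F (r x))) (at x within {\<alpha>..\<beta>})"
      using has_vector_derivative_within_subset[OF deriv[of x], of "{\<alpha>..\<beta>}"] x \<open>0 \<le> \<alpha>\<close>
      by (auto simp: has_vector_derivative_def)
    show "(W has_derivative (\<lambda>h. r x \<bullet> (h *\<^sub>R F (r x)) + (h *\<^sub>R F (r x)) \<bullet> r x + 2 * \<mu> * h))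
        (at x within {\<alpha>..\<beta>})"
      unfolding W_def by (intro has_derivative_add[OF has_derivative_inner[OF d d]] derivative_eq_intros) auto
  qed
  then obtain x where x: "x \<in> {\<alpha><..<\<beta>}"
    and eq: "W \<beta> - W \<alpha> = (\<beta> - \<alpha>) * (2 * (r x \<bullet> F (r x)) + 2 * \<mu>)"
    by (auto simp: algebra_simps inner_commute)
  have "2 * (r x \<bullet> F (r x)) + 2 * \<mu> \<le> 0"
    using dissip[of x] x by simp
  then have "W \<beta> \<le> W \<alpha>"
    using eq mult_nonneg_nonpos[of "\<beta> - \<alpha>"] lt by fastforce
  then show ?thesis
    by (simp add: W_def power2_norm_eq_inner algebra_simps)
qed simp

lemma trajectory_dist_le:
  fixes r :: "real \<Rightarrow> 'a::real_normed_vector"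
  assumes deriv: "\<And>t. t \<ge> 0 \<Longrightarrow> (r has_vector_derivative F (r t)) (at t within {0..})"
    and "0 \<le> t" "t \<le> \<tau>"
    and speed: "\<And>\<sigma>. \<sigma> \<in> {t..\<tau>} \<Longrightarrow> norm (F (r \<sigma>)) \<le> B"
  shows "norm (r \<tau> - r t) \<le> B * (\<tau> - t)"
proof -
  have "norm (r \<tau> - r t) \<le> B * norm (\<tau> - t)"
  proof (rule differentiable_bound[where S="{t..\<tau>}" and f'="\<lambda>x h. h *\<^sub>R F (r x)"])
    fix x assume x: "x \<in> {t..\<tau>}"
    show "(r has_derivative (\<lambda>h. h *\<^sub>R F (r x))) (at x within {t..\<tau>})"
      using has_vector_derivative_within_subset[OF deriv[of x], of "{t..\<tau>}"] x \<open>0 \<le> t\<close>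
      by (auto simp: has_vector_derivative_def)
    have "onorm (\<lambda>h. h *\<^sub>R F (r x)) = onorm (\<lambda>h::real. h) * norm (F (r x))"
      by (rule onorm_scaleR_left) (rule bounded_linear_ident)
    then show "onorm (\<lambda>h. h *\<^sub>R F (r x)) \<le> B"
      using speed[OF x] by (simp add: onorm_id[unfolded id_def])
  qed (use assms in auto)
  then show ?thesis
    using \<open>t \<le> \<tau>\<close> by simp
qed

lemma infdist_trajectory_ge_half:
  fixes r :: "real \<Rightarrow> 'a::real_normed_vector"
  assumes deriv: "\<And>t. t \<ge> 0 \<Longrightarrow> (r has_vector_derivative F (r t)) (at t within {0..})"
    and "0 \<le> t" and \<tau>: "\<tau> \<in> {t..t + e / (2 * B)}" and "B > 0"
    and far: "e \<le> infdist (r t) S"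
    and speed: "\<And>\<sigma>. \<sigma> \<in> {t..\<tau>} \<Longrightarrow> norm (F (r \<sigma>)) \<le> B"
  shows "e / 2 \<le> infdist (r \<tau>) S"
proof -
  have "norm (r \<tau> - r t) \<le> B * (\<tau> - t)"
    using trajectory_dist_le[OF deriv \<open>0 \<le> t\<close> _ speed] \<tau> by auto
  also have "\<dots> \<le> e / 2"
    using \<tau> \<open>B > 0\<close> by (simp add: field_simps)
  finally show ?thesis
    using infdist_triangle[of "r t" S "r \<tau>"] far by (simp add: dist_norm norm_minus_commute)
qed

lemma compact_pos_lower_bound:
  fixes g :: "'a::metric_space \<Rightarrow> real"
  assumes "compact K" "continuous_on K g" "\<And>x. x \<in> K \<Longrightarrow> 0 < g x"
  obtains m where "0 < m" "\<And>x. x \<in> K \<Longrightarrow> m \<le> g x"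
proof (cases "K = {}")
  case False
  then obtain x0 where "x0 \<in> K" "\<And>y. y \<in> K \<Longrightarrow> g x0 \<le> g y"
    using continuous_attains_inf[OF assms(1) _ assms(2)] by blast
  then show ?thesis
    using that assms(3) by blast
qed (use that[of 1] in auto)

lemma infdist_trajectory_tendsto_zero:
  fixes F :: "'a::euclidean_space \<Rightarrow> 'a" and g :: "'a \<Rightarrow> real"
  assumes contF: "continuous_on UNIV F" and contg: "continuous_on UNIV g"
    and g_nonneg: "\<And>x. 0 \<le> g x" and dissip: "\<And>x. x \<bullet> F x \<le> - g x"
    and zeros: "\<And>x. g x = 0 \<Longrightarrow> x \<in> S"
    and deriv: "\<And>t. t \<ge> 0 \<Longrightarrow> (r has_vector_derivative F (r t)) (at t within {0..})"
  shows "((\<lambda>t. infdist (r t) S) \<longlongrightarrow> 0) at_top"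
proof -
  define V where "V t = (norm (r t))\<^sup>2" for t
  have V_dissipation: "V \<beta> + 2 * \<mu> * (\<beta> - \<alpha>) \<le> V \<alpha>"
    if "0 \<le> \<alpha>" "\<alpha> \<le> \<beta>" "\<And>\<tau>. \<tau> \<in> {\<alpha>..\<beta>} \<Longrightarrow> \<mu> \<le> g (r \<tau>)" for \<alpha> \<beta> \<mu>
    unfolding V_def using sqnorm_decrease_along_trajectory[OF deriv that(1,2)] dissip that(3)
    by (smt (verit))
  have V_mono: "V \<beta> \<le> V \<alpha>" if "0 \<le> \<alpha>" "\<alpha> \<le> \<beta>" for \<alpha> \<beta>
    using V_dissipation[OF that, of 0] g_nonneg by simp
  define R where "R = norm (r 0)"
  have in_ball: "r t \<in> cball 0 R" if "t \<ge> 0" for t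
    using V_mono[OF order_refl that] by (simp add: V_def R_def power2_le_iff_abs_le)
  have "compact (F ` cball 0 R)"
    by (intro compact_continuous_image continuous_on_subset[OF contF]) auto
  then obtain B where "B > 0" and speed: "\<And>x. x \<in> cball 0 R \<Longrightarrow> norm (F x) \<le> B"
    using compact_imp_bounded bounded_pos by (metis image_eqI)
  define L where "L = Inf (V ` {0..})"
  have L_le: "L \<le> V t" if "t \<ge> 0" for t
    unfolding L_def using that by (intro cInf_lower bdd_belowI[of _ 0]) (auto simp: V_def)
  show ?thesis
  proof (rule tendstoI, rule ccontr)
    fix e :: real assume "e > 0" and "\<not> (\<forall>\<^sub>F t in at_top. dist (infdist (r t) S) 0 < e)"
    then have far: "\<exists>t\<ge>T. e \<le> infdist (r t) S" for T
      by (auto simp: eventually_at_top_linorder infdist_nonneg not_less)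
    define K where "K = cball 0 R \<inter> {x. e/2 \<le> infdist x S}"
    have "compact K"
      unfolding K_def by (intro compact_Int_closed closed_Collect_le continuous_intros) auto
    moreover have "0 < g x" if "x \<in> K" for x
      using that g_nonneg[of x] zeros[of x] \<open>e > 0\<close> by (force simp: K_def)
    ultimately obtain m where "0 < m" and m_le: "\<And>x. x \<in> K \<Longrightarrow> m \<le> g x"
      using compact_pos_lower_bound continuous_on_subset[OF contg] by (metis subset_UNIV)
    define h where "h = e / (2 * B)"
    have "h > 0" using \<open>e > 0\<close> \<open>B > 0\<close> by (simp add: h_def)
    obtain T where "T \<ge> 0" "V T < L + 2 * m * h"
      using cInf_lessD[of "V ` {0..}" "L + 2 * m * h"] \<open>0 < m\<close> \<open>h > 0\<close>
      unfolding L_def by fastforce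
    obtain t where "t \<ge> T" and far_t: "e \<le> infdist (r t) S"
      using far by blast
    have "m \<le> g (r \<tau>)" if \<tau>: "\<tau> \<in> {t..t + h}" for \<tau>
    proof -
      have "e / 2 \<le> infdist (r \<tau>) S"
        using infdist_trajectory_ge_half[OF deriv _ \<tau>[unfolded h_def] \<open>B > 0\<close> far_t] speed in_ball
          \<open>T \<ge> 0\<close> \<open>t \<ge> T\<close> by auto
      then show ?thesis
        using m_le in_ball[of \<tau>] \<tau> \<open>T \<ge> 0\<close> \<open>t \<ge> T\<close> by (simp add: K_def)
    qed
    then have "V (t + h) + 2 * m * h \<le> V T"
      using V_dissipation[of t "t + h" m] V_mono[of T t] \<open>T \<ge> 0\<close> \<open>t \<ge> T\<close> \<open>h > 0\<close> by auto
    then show False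
      using L_le[of "t + h"] \<open>V T < L + 2 * m * h\<close> \<open>T \<ge> 0\<close> \<open>t \<ge> T\<close> \<open>h > 0\<close> by linarith
  qed
qed

definition sais_dissipation :: "('n::finite \<Rightarrow> 'n \<Rightarrow> real) \<Rightarrow> (real^'n \<Rightarrow> real^'n) \<Rightarrow> real^'n \<Rightarrow> real" where
  "sais_dissipation a H x = (\<Sum>i\<in>UNIV. (x$i)\<^sup>2 * (\<Sum>j\<in>UNIV. a i j * H x $ j))"

lemma inner_reduced_field:
  assumes "k \<noteq> 0"
  shows "x \<bullet> reduced_field ba k a H x = - (k + ba) * sais_dissipation a H x"
proof -
  have "k * (1 + ba / k) = k + ba"
    using assms by (simp add: field_simps)
  then show ?thesis
    unfolding inner_vec_def reduced_field_def sais_dissipation_def sum_distrib_left[of "- (k + ba)"]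
    by (intro sum.cong) (auto simp: power2_eq_square algebra_simps)
qed

lemma sais_dissipation_nonneg:
  assumes "\<And>i j. 0 \<le> a i j" "\<And>x j. 0 \<le> H x $ j"
  shows "0 \<le> sais_dissipation a H x"
  unfolding sais_dissipation_def by (intro sum_nonneg mult_nonneg_nonneg assms) auto

lemma sais_dissipation_eq_0_imp_Omega:
  assumes "\<And>i j. 0 \<le> a i j" "\<And>x j. 0 \<le> H x $ j"
    and "sais_dissipation a H x = 0"
  shows "x \<in> Omega_set a H"
proof -
  have "\<forall>i\<in>UNIV. (x$i)\<^sup>2 * (\<Sum>j\<in>UNIV. a i j * H x $ j) = 0"
    using assms(3) unfolding sais_dissipation_def
    by (subst sum_nonneg_eq_0_iff[symmetric]) (auto intro!: sum_nonneg mult_nonneg_nonneg assms(1,2))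
  then show ?thesis
    by (simp add: Omega_set_def)
qed

lemma continuous_on_sais_dissipation:
  "continuous_on UNIV H \<Longrightarrow> continuous_on UNIV (sais_dissipation a H)"
  unfolding sais_dissipation_def
  by (intro continuous_intros continuous_on_component)

lemma continuous_on_reduced_field:
  assumes "continuous_on UNIV H"
  shows "continuous_on UNIV (reduced_field ba k a H)"
  unfolding reduced_field_def
  by (intro continuous_on_vec_lambda continuous_intros continuous_on_component assms)

lemma adjacency_nonneg: "adjacency a \<Longrightarrow> 0 \<le> a i j"
  unfolding adjacency_def by (metis order_refl zero_le_one)

theorem lemma1:
  fixes a :: "'n::finite \<Rightarrow> 'n \<Rightarrow> real"
    and b0 ba k d :: real
    and H :: "real^'n \<Rightarrow> real^'n"
    and r :: "real \<Rightarrow> real^'n"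
  assumes "adjacency a"
    and "b0 > 0" and "d > 0" and "k > 0" and "0 \<le> ba" and "ba < b0"
    and "center_manifold_map b0 ba k d a H"
    and "\<And>t. t \<ge> 0 \<Longrightarrow> (r has_vector_derivative reduced_field ba k a H (r t)) (at t within {0..})"
  shows "((\<lambda>t. infdist (r t) (Omega_set a H)) \<longlongrightarrow> 0) at_top"
proof -
  obtain H' where H_deriv: "\<And>x. (H has_derivative H' x) (at x)"
    and H_nonneg: "\<And>x j. 0 \<le> H x $ j"
    using assms(7) unfolding center_manifold_map_def by blast
  have contH: "continuous_on UNIV H"
    using H_deriv by (auto intro: continuous_at_imp_continuous_on has_derivative_continuous)
  have a_nonneg: "\<And>i j. 0 \<le> a i j"
    using adjacency_nonneg[OF assms(1)] .
  have "0 < k + ba"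
    using assms(4,5) by simp
  show ?thesis
  proof (rule infdist_trajectory_tendsto_zero[where g="\<lambda>x. (k + ba) * sais_dissipation a H x"])
    show "continuous_on UNIV (reduced_field ba k a H)"
      using continuous_on_reduced_field[OF contH] .
    show "continuous_on UNIV (\<lambda>x. (k + ba) * sais_dissipation a H x)"
      by (intro continuous_intros continuous_on_sais_dissipation contH)
    show "0 \<le> (k + ba) * sais_dissipation a H x" for x
      using \<open>0 < k + ba\<close> sais_dissipation_nonneg[OF a_nonneg H_nonneg] by simp
    show "x \<bullet> reduced_field ba k a H x \<le> - ((k + ba) * sais_dissipation a H x)" for x
      using assms(4) by (simp add: inner_reduced_field algebra_simps)
    show "x \<in> Omega_set a H" if "(k + ba) * sais_dissipation a H x = 0" for x
      using that \<open>0 < k + ba\<close> sais_dissipation_eq_0_imp_Omega[OF a_nonneg H_nonneg] by simp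
  qed (use assms(8) in auto)
qed

end
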